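(* Let $L,k,n$ be positive integers with $2k<n$ and $q$ a prime power. Every $[n,k,L]_q$-AAD family $\mathcal F$ satisfies $|\mathcal F|\le 1+L\frac{q^{n-k}-1}{q^k-1}$. Consequently, for fixed $n,k,L$, $p^{AAD}(n,k,L)\le n-2k$.
   Context: An $[n,k,L]_q$-almost affinely disjoint (AAD) family is a family $\mathcal F$ of $k$-dimensional linear subspaces of $\mathbb F_q^n$ ($n>2k$) such that (1) any two distinct members intersect only in $\{0\}$, and (2) for every $S\in\mathcal F$ and every $\boldsymbol u\in\mathbb F_q^n\setminus S$, the affine subspace $\boldsymbol u+S$ has nonempty intersection with at most $L$ members of $\mathcal F$. $m^{AAD}_q(n,k,L)$ is the maximum size of such a family and $p^{AAD}(n,k,L)=\limsup_{q\to\infty}\log_q m^{AAD}_q(n,k,L)$, the limsup over prime powers $q$. *)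

theory Defs
  imports "HOL-Algebra.Ring" "HOL-Algebra.Ring" "HOL-Number_Theory.Prime_Powers"
    "HOL-Library.Liminf_Limsup" "HOL-Library.Extended_Real" "HOL-Library.FuncSet"
begin

definition vspace :: "('a, 'b) ring_scheme \<Rightarrow> nat \<Rightarrow> (nat \<Rightarrow> 'a) set" where
  "vspace R n = {0..<n} \<rightarrow>\<^sub>E carrier R"

definition vzero :: "('a, 'b) ring_scheme \<Rightarrow> nat \<Rightarrow> nat \<Rightarrow> 'a" where
  "vzero R n = (\<lambda>i\<in>{0..<n}. \<zero>\<^bsub>R\<^esub>)"

definition vadd :: "('a, 'b) ring_scheme \<Rightarrow> nat \<Rightarrow> (nat \<Rightarrow> 'a) \<Rightarrow> (nat \<Rightarrow> 'a) \<Rightarrow> nat \<Rightarrow> 'a" where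
  "vadd R n v w = (\<lambda>i\<in>{0..<n}. v i \<oplus>\<^bsub>R\<^esub> w i)"

definition vsmult :: "('a, 'b) ring_scheme \<Rightarrow> nat \<Rightarrow> 'a \<Rightarrow> (nat \<Rightarrow> 'a) \<Rightarrow> nat \<Rightarrow> 'a" where
  "vsmult R n a v = (\<lambda>i\<in>{0..<n}. a \<otimes>\<^bsub>R\<^esub> v i)"

fun lincomb :: "('a, 'b) ring_scheme \<Rightarrow> nat \<Rightarrow> 'a list \<Rightarrow> (nat \<Rightarrow> 'a) list \<Rightarrow> nat \<Rightarrow> 'a" where
  "lincomb R n (c # cs) (v # vs) = vadd R n (vsmult R n c v) (lincomb R n cs vs)"
| "lincomb R n _ _ = vzero R n"

definition vspan :: "('a, 'b) ring_scheme \<Rightarrow> nat \<Rightarrow> (nat \<Rightarrow> 'a) list \<Rightarrow> (nat \<Rightarrow> 'a) set" where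
  "vspan R n vs = {lincomb R n cs vs | cs. length cs = length vs \<and> set cs \<subseteq> carrier R}"

definition lin_indep :: "('a, 'b) ring_scheme \<Rightarrow> nat \<Rightarrow> (nat \<Rightarrow> 'a) list \<Rightarrow> bool" where
  "lin_indep R n vs \<longleftrightarrow> set vs \<subseteq> vspace R n \<and>
     (\<forall>cs. length cs = length vs \<and> set cs \<subseteq> carrier R \<and> lincomb R n cs vs = vzero R n
        \<longrightarrow> set cs \<subseteq> {\<zero>\<^bsub>R\<^esub>})"

definition is_subspace_dim :: "('a, 'b) ring_scheme \<Rightarrow> nat \<Rightarrow> nat \<Rightarrow> (nat \<Rightarrow> 'a) set \<Rightarrow> bool" where
  "is_subspace_dim R n k S \<longleftrightarrow> (\<exists>vs. length vs = k \<and> lin_indep R n vs \<and> S = vspan R n vs)"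

definition AAD :: "('a, 'b) ring_scheme \<Rightarrow> nat \<Rightarrow> nat \<Rightarrow> nat \<Rightarrow> (nat \<Rightarrow> 'a) set set \<Rightarrow> bool" where
  "AAD R n k L \<F> \<longleftrightarrow> 2 * k < n \<and>
     (\<forall>S\<in>\<F>. is_subspace_dim R n k S) \<and>
     (\<forall>S\<in>\<F>. \<forall>T\<in>\<F>. S \<noteq> T \<longrightarrow> S \<inter> T = {vzero R n}) \<and>
     (\<forall>S\<in>\<F>. \<forall>u\<in>vspace R n - S.
        card {T\<in>\<F>. (vadd R n u ` S) \<inter> T \<noteq> {}} \<le> L)"

text \<open>m_q(n,k,L): maximum size of an AAD family over the field with q elements.  Every finite
  field of order q is isomorphic to a field structure on {0..<q}, so we range over those.\<close>
definition mAAD :: "nat \<Rightarrow> nat \<Rightarrow> nat \<Rightarrow> nat \<Rightarrow> nat" where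
  "mAAD q n k L = Sup {c. \<exists>(K :: nat ring) \<F>. field K \<and> carrier K = {0..<q} \<and> AAD K n k L \<F> \<and> c = card \<F>}"

definition pAAD :: "nat \<Rightarrow> nat \<Rightarrow> nat \<Rightarrow> ereal" where
  "pAAD n k L = Limsup (inf sequentially (principal {q. primepow q}))
      (\<lambda>q. ereal (log (real q) (real (mAAD q n k L))))"

end

theory Submission
  imports Defs "HOL-Real_Asymp.Real_Asymp"
begin

text \<open>Fix \<open>S \<in> \<F>\<close>. For every other \<open>T \<in> \<F>\<close> the sums \<open>t + s\<close> with \<open>t \<in> T - {0}\<close>,
  \<open>s \<in> S\<close> are pairwise distinct (because \<open>S \<inter> T = {0}\<close>), lie outside \<open>S\<close>, and the coset
  \<open>t + s + S\<close> meets \<open>T\<close> in \<open>t\<close>. Double counting the pairs \<open>(u, T)\<close> with \<open>u \<notin> S\<close> and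
  \<open>(u + S) \<inter> T \<noteq> {}\<close> therefore gives \<open>(|\<F>| - 1)(q^k - 1) q^k \<le> L (q^n - q^k)\<close>. The
  resulting bound is at most \<open>(1 + 2L) q^(n-2k)\<close>, so \<open>log_q m_q \<le> n - 2k + O(1 / log q)\<close>.\<close>

definition vdiff :: "('a, 'b) ring_scheme \<Rightarrow> nat \<Rightarrow> (nat \<Rightarrow> 'a) \<Rightarrow> (nat \<Rightarrow> 'a) \<Rightarrow> nat \<Rightarrow> 'a" where
  "vdiff R n v w = vadd R n v (vsmult R n (\<ominus>\<^bsub>R\<^esub> \<one>\<^bsub>R\<^esub>) w)"

lemma sum_card_filter_swap:
  fixes P :: "'a \<Rightarrow> 'b \<Rightarrow> bool"
  assumes "finite A" "finite B"
  shows "(\<Sum>a\<in>A. card {b \<in> B. P a b}) = (\<Sum>b\<in>B. card {a \<in> A. P a b})"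
proof -
  have "(\<Sum>a\<in>A. card {b \<in> B. P a b}) = (\<Sum>a\<in>A. \<Sum>b\<in>B. if P a b then 1 else 0)"
    using assms by (simp add: sum.inter_filter[symmetric])
  also have "\<dots> = (\<Sum>b\<in>B. \<Sum>a\<in>A. if P a b then 1 else 0)"
    by (rule sum.swap)
  also have "\<dots> = (\<Sum>b\<in>B. card {a \<in> A. P a b})"
    using assms by (simp add: sum.inter_filter[symmetric])
  finally show ?thesis .
qed

context cring begin

lemma eq_if_add_neg_eq_zero:
  "a \<in> carrier R \<Longrightarrow> b \<in> carrier R \<Longrightarrow> a \<oplus> \<ominus> b = \<zero> \<Longrightarrow> a = b"
  using minus_equality[of a "\<ominus> b"] by simp

lemma vspace_mem: "v \<in> vspace R n \<Longrightarrow> i < n \<Longrightarrow> v i \<in> carrier R"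
  unfolding vspace_def by auto

lemma vspace_eqI:
  "v \<in> vspace R n \<Longrightarrow> w \<in> vspace R n \<Longrightarrow> (\<And>i. i < n \<Longrightarrow> v i = w i) \<Longrightarrow> v = w"
  unfolding vspace_def by (rule ext) (metis PiE_arb atLeastLessThan_iff)

lemma vzero_in: "vzero R n \<in> vspace R n"
  unfolding vzero_def vspace_def by auto

lemma vadd_in: "v \<in> vspace R n \<Longrightarrow> w \<in> vspace R n \<Longrightarrow> vadd R n v w \<in> vspace R n"
  unfolding vadd_def vspace_def by auto

lemma vsmult_in: "a \<in> carrier R \<Longrightarrow> v \<in> vspace R n \<Longrightarrow> vsmult R n a v \<in> vspace R n"
  unfolding vsmult_def vspace_def by auto

lemma vdiff_in: "v \<in> vspace R n \<Longrightarrow> w \<in> vspace R n \<Longrightarrow> vdiff R n v w \<in> vspace R n"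
  unfolding vdiff_def by (intro vadd_in vsmult_in) auto

lemma vdiff_apply: "w \<in> vspace R n \<Longrightarrow> i < n \<Longrightarrow> vdiff R n v w i = v i \<ominus> w i"
  unfolding vdiff_def vadd_def vsmult_def minus_eq by (simp add: vspace_mem l_minus)

lemma vdiff_eq_vzero_iff:
  assumes "v \<in> vspace R n" "w \<in> vspace R n"
  shows "vdiff R n v w = vzero R n \<longleftrightarrow> v = w"
proof
  assume vw: "vdiff R n v w = vzero R n"
  show "v = w"
  proof (rule vspace_eqI[OF assms])
    fix i assume i: "i < n"
    have c: "v i \<in> carrier R" "w i \<in> carrier R" using assms i vspace_mem by auto
    have "v i \<oplus> \<ominus> w i = \<zero>"
      using fun_cong[OF vw, of i] assms(2) i by (simp add: vdiff_apply vzero_def minus_eq)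
    then show "v i = w i" using c by (rule eq_if_add_neg_eq_zero[rotated 2])
  qed
next
  assume "v = w"
  then show "vdiff R n v w = vzero R n"
    using assms by (auto simp: vdiff_def vadd_def vsmult_def vzero_def vspace_mem l_minus r_neg)
qed

lemma vdiff_vadd_cancel:
  "v \<in> vspace R n \<Longrightarrow> w \<in> vspace R n \<Longrightarrow> vdiff R n (vadd R n v w) w = v"
  by (rule vspace_eqI[OF vdiff_in[OF vadd_in]])
    (auto simp: vdiff_apply vadd_def vspace_mem minus_eq a_assoc r_neg)

lemma vdiff_eq_vdiff_if_vadd_eq:
  assumes "t1 \<in> vspace R n" "t2 \<in> vspace R n" "s1 \<in> vspace R n" "s2 \<in> vspace R n"
    and "vadd R n t1 s1 = vadd R n t2 s2"
  shows "vdiff R n t1 t2 = vdiff R n s2 s1"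
proof (rule vspace_eqI[OF vdiff_in vdiff_in])
  fix i assume i: "i < n"
  have c: "t1 i \<in> carrier R" "t2 i \<in> carrier R" "s1 i \<in> carrier R" "s2 i \<in> carrier R"
    using assms i vspace_mem by auto
  have sum_eq: "t1 i \<oplus> s1 i = t2 i \<oplus> s2 i"
    using fun_cong[OF assms(5), of i] i by (simp add: vadd_def)
  have "t1 i \<ominus> t2 i = (t1 i \<oplus> s1 i) \<oplus> (\<ominus> s1 i \<oplus> \<ominus> t2 i)"
    using c by (simp add: minus_eq a_assoc r_neg2)
  also have "\<dots> = t2 i \<oplus> (\<ominus> t2 i \<oplus> (s2 i \<oplus> \<ominus> s1 i))"
    using c by (simp add: sum_eq a_ac)
  also have "\<dots> = s2 i \<ominus> s1 i"
    using c by (simp add: minus_eq r_neg2)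
  finally show "vdiff R n t1 t2 i = vdiff R n s2 s1 i"
    using i assms by (simp add: vdiff_apply)
qed (use assms in auto)

lemma lincomb_in:
  "set cs \<subseteq> carrier R \<Longrightarrow> set vs \<subseteq> vspace R n \<Longrightarrow> lincomb R n cs vs \<in> vspace R n"
proof (induction vs arbitrary: cs)
  case Nil then show ?case by (cases cs) (auto intro!: vzero_in)
next
  case (Cons v vs) then show ?case by (cases cs) (auto intro!: vadd_in vsmult_in vzero_in)
qed

lemma lincomb_replicate_zero:
  "set vs \<subseteq> vspace R n \<Longrightarrow> lincomb R n (replicate (length vs) \<zero>) vs = vzero R n"
  by (induction vs) (auto simp: vadd_def vsmult_def vzero_def vspace_mem)

lemma lincomb_map2_add:
  assumes "length cs = length vs" "length ds = length vs"
    and "set cs \<subseteq> carrier R" "set ds \<subseteq> carrier R" "set vs \<subseteq> vspace R n"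
  shows "lincomb R n (map2 (\<oplus>) cs ds) vs = vadd R n (lincomb R n cs vs) (lincomb R n ds vs)"
  using assms
proof (induction vs arbitrary: cs ds)
  case Nil
  then show ?case by (auto simp: vadd_def vzero_def)
next
  case (Cons v vs)
  then obtain c cs' d ds' where cs: "cs = c # cs'" and ds: "ds = d # ds'"
    by (metis length_Suc_conv)
  have in_vspace: "lincomb R n cs' vs \<in> vspace R n" "lincomb R n ds' vs \<in> vspace R n" "v \<in> vspace R n"
    using Cons.prems by (auto simp: cs ds intro!: lincomb_in)
  have "(c \<oplus> d) \<otimes> v i \<oplus> (lincomb R n cs' vs i \<oplus> lincomb R n ds' vs i)
      = (c \<otimes> v i \<oplus> lincomb R n cs' vs i) \<oplus> (d \<otimes> v i \<oplus> lincomb R n ds' vs i)" if "i < n" for i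
    using that in_vspace vspace_mem[of _ n i] Cons.prems by (simp add: cs ds l_distr a_ac)
  then show ?case
    using Cons by (auto simp: cs ds vadd_def vsmult_def)
qed

lemma lincomb_map_mult:
  assumes "a \<in> carrier R" "length cs = length vs" "set cs \<subseteq> carrier R" "set vs \<subseteq> vspace R n"
  shows "lincomb R n (map ((\<otimes>) a) cs) vs = vsmult R n a (lincomb R n cs vs)"
  using assms
proof (induction vs arbitrary: cs)
  case Nil
  then show ?case by (auto simp: vsmult_def vzero_def)
next
  case (Cons v vs)
  then obtain c cs' where cs: "cs = c # cs'"
    by (metis length_Suc_conv)
  have in_vspace: "lincomb R n cs' vs \<in> vspace R n" "v \<in> vspace R n"
    using Cons.prems by (auto simp: cs intro!: lincomb_in)
  have "(a \<otimes> c) \<otimes> v i \<oplus> a \<otimes> lincomb R n cs' vs i = a \<otimes> (c \<otimes> v i \<oplus> lincomb R n cs' vs i)"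
    if "i < n" for i
    using that in_vspace vspace_mem[of _ n i] Cons.prems by (simp add: cs r_distr m_assoc)
  then show ?case
    using Cons by (auto simp: cs vadd_def vsmult_def)
qed

lemma set_map2_add_subset:
  "set cs \<subseteq> carrier R \<Longrightarrow> set ds \<subseteq> carrier R \<Longrightarrow> set (map2 (\<oplus>) cs ds) \<subseteq> carrier R"
proof (induction cs arbitrary: ds)
  case (Cons c cs) then show ?case by (cases ds) auto
qed simp

lemma vspan_subset_vspace: "set vs \<subseteq> vspace R n \<Longrightarrow> vspan R n vs \<subseteq> vspace R n"
  unfolding vspan_def using lincomb_in by auto

lemma vzero_in_vspan: "set vs \<subseteq> vspace R n \<Longrightarrow> vzero R n \<in> vspan R n vs"
  unfolding vspan_def using lincomb_replicate_zero[of vs]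
  by (auto intro!: exI[of _ "replicate (length vs) \<zero>"])

lemma vadd_in_vspan:
  assumes "set vs \<subseteq> vspace R n" "x \<in> vspan R n vs" "y \<in> vspan R n vs"
  shows "vadd R n x y \<in> vspan R n vs"
proof -
  obtain cs ds where "x = lincomb R n cs vs" "length cs = length vs" "set cs \<subseteq> carrier R"
    "y = lincomb R n ds vs" "length ds = length vs" "set ds \<subseteq> carrier R"
    using assms(2,3) unfolding vspan_def by blast
  then show ?thesis
    using assms(1) set_map2_add_subset[of cs ds] lincomb_map2_add[of cs vs ds] unfolding vspan_def
    by (auto intro!: exI[of _ "map2 (\<oplus>) cs ds"])
qed

lemma vsmult_in_vspan:
  assumes "set vs \<subseteq> vspace R n" "a \<in> carrier R" "x \<in> vspan R n vs"
  shows "vsmult R n a x \<in> vspan R n vs"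
proof -
  obtain cs where "x = lincomb R n cs vs" "length cs = length vs" "set cs \<subseteq> carrier R"
    using assms(3) unfolding vspan_def by blast
  moreover have "set (map ((\<otimes>) a) cs) \<subseteq> carrier R"
    using \<open>set cs \<subseteq> carrier R\<close> assms(2) by auto
  ultimately show ?thesis
    using assms(1,2) lincomb_map_mult[of a cs vs] unfolding vspan_def
    by (auto intro!: exI[of _ "map ((\<otimes>) a) cs"])
qed

lemma lin_indep_lincomb_inj:
  assumes li: "lin_indep R n vs"
  shows "inj_on (\<lambda>cs. lincomb R n cs vs) {cs. set cs \<subseteq> carrier R \<and> length cs = length vs}"
proof (rule inj_onI)
  fix cs ds
  assume cs: "cs \<in> {cs. set cs \<subseteq> carrier R \<and> length cs = length vs}"
    and ds: "ds \<in> {cs. set cs \<subseteq> carrier R \<and> length cs = length vs}"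
    and eq: "lincomb R n cs vs = lincomb R n ds vs"
  have vs: "set vs \<subseteq> vspace R n" using li unfolding lin_indep_def by auto
  let ?neg_ds = "map ((\<otimes>) (\<ominus> \<one>)) ds"
  let ?es = "map2 (\<oplus>) cs ?neg_ds"
  have neg_ds: "set ?neg_ds \<subseteq> carrier R" using ds by auto
  have "lincomb R n ?es vs = vdiff R n (lincomb R n cs vs) (lincomb R n ds vs)"
    using cs ds neg_ds vs by (simp add: lincomb_map2_add lincomb_map_mult vdiff_def)
  also have "\<dots> = vzero R n"
    using ds vs eq by (simp add: vdiff_eq_vzero_iff lincomb_in)
  finally have "lincomb R n ?es vs = vzero R n" .
  moreover have "length ?es = length vs" "set ?es \<subseteq> carrier R"
    using cs ds set_map2_add_subset[OF _ neg_ds] by auto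
  ultimately have "set ?es \<subseteq> {\<zero>}"
    using li unfolding lin_indep_def by blast
  show "cs = ds"
  proof (rule nth_equalityI)
    show "length cs = length ds" using cs ds by simp
    fix i assume i: "i < length cs"
    have ci: "cs ! i \<in> carrier R" "ds ! i \<in> carrier R" using cs ds i by auto
    have "?es ! i \<in> set ?es" using i cs ds by (intro nth_mem) simp
    then have "cs ! i \<oplus> \<ominus> \<one> \<otimes> ds ! i = \<zero>"
      using \<open>set ?es \<subseteq> {\<zero>}\<close> i cs ds by auto
    then show "cs ! i = ds ! i"
      using ci by (auto simp: l_minus intro: eq_if_add_neg_eq_zero)
  qed
qed

lemma card_vspan:
  assumes "lin_indep R n vs" "finite (carrier R)"
  shows "card (vspan R n vs) = card (carrier R) ^ length vs"
proof -
  have "vspan R n vs = (\<lambda>cs. lincomb R n cs vs) ` {cs. set cs \<subseteq> carrier R \<and> length cs = length vs}"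
    unfolding vspan_def by auto
  then show ?thesis
    using card_image[OF lin_indep_lincomb_inj[OF assms(1)]] card_lists_length_eq[OF assms(2)] by simp
qed

lemma finite_vspace: "finite (carrier R) \<Longrightarrow> finite (vspace R n)"
  unfolding vspace_def by (simp add: finite_PiE)

lemma card_vspace: "finite (carrier R) \<Longrightarrow> card (vspace R n) = card (carrier R) ^ n"
  unfolding vspace_def by (simp add: card_PiE)

lemma subspace_subset_vspace: "is_subspace_dim R n k T \<Longrightarrow> T \<subseteq> vspace R n"
  unfolding is_subspace_dim_def lin_indep_def using vspan_subset_vspace by blast

lemma vzero_in_subspace: "is_subspace_dim R n k T \<Longrightarrow> vzero R n \<in> T"
  unfolding is_subspace_dim_def lin_indep_def using vzero_in_vspan by blast

lemma vadd_in_subspace: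
  "is_subspace_dim R n k T \<Longrightarrow> x \<in> T \<Longrightarrow> y \<in> T \<Longrightarrow> vadd R n x y \<in> T"
  unfolding is_subspace_dim_def lin_indep_def using vadd_in_vspan by blast

lemma vsmult_in_subspace:
  "is_subspace_dim R n k T \<Longrightarrow> a \<in> carrier R \<Longrightarrow> x \<in> T \<Longrightarrow> vsmult R n a x \<in> T"
  unfolding is_subspace_dim_def lin_indep_def using vsmult_in_vspan by blast

lemma vdiff_in_subspace:
  "is_subspace_dim R n k T \<Longrightarrow> x \<in> T \<Longrightarrow> y \<in> T \<Longrightarrow> vdiff R n x y \<in> T"
  unfolding vdiff_def by (intro vadd_in_subspace vsmult_in_subspace) auto

lemma card_subspace:
  "is_subspace_dim R n k T \<Longrightarrow> finite (carrier R) \<Longrightarrow> card T = card (carrier R) ^ k"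
  unfolding is_subspace_dim_def using card_vspan by blast

lemma inj_on_vadd_complementary:
  assumes S: "is_subspace_dim R n k S" and T: "is_subspace_dim R n k' T"
    and ST: "S \<inter> T = {vzero R n}"
  shows "inj_on (\<lambda>(t, s). vadd R n t s) (T \<times> S)"
proof (rule inj_onI, clarify)
  fix t1 s1 t2 s2 assume t: "t1 \<in> T" "t2 \<in> T" and s: "s1 \<in> S" "s2 \<in> S"
    and eq: "vadd R n t1 s1 = vadd R n t2 s2"
  have in_vspace: "t1 \<in> vspace R n" "t2 \<in> vspace R n" "s1 \<in> vspace R n" "s2 \<in> vspace R n"
    using t s subspace_subset_vspace[OF S] subspace_subset_vspace[OF T] by auto
  have "vdiff R n t1 t2 = vdiff R n s2 s1"
    using vdiff_eq_vdiff_if_vadd_eq[OF in_vspace eq] .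
  moreover have "vdiff R n t1 t2 \<in> T" "vdiff R n s2 s1 \<in> S"
    using vdiff_in_subspace[OF T t] vdiff_in_subspace[OF S s(2,1)] .
  ultimately have "vdiff R n t1 t2 = vzero R n" "vdiff R n s2 s1 = vzero R n"
    using ST by auto
  then show "t1 = t2 \<and> s1 = s2"
    using in_vspace by (simp add: vdiff_eq_vzero_iff)
qed

text \<open>The coset of \<open>S\<close> through \<open>t + s\<close> contains \<open>t = (t + s) - s\<close>.\<close>

lemma vadd_in_translates_meeting:
  assumes S: "is_subspace_dim R n k S" and T: "is_subspace_dim R n k' T"
    and ST: "S \<inter> T = {vzero R n}"
    and t: "t \<in> T" "t \<noteq> vzero R n" and s: "s \<in> S"
  shows "vadd R n t s \<in> {u \<in> vspace R n - S. vadd R n u ` S \<inter> T \<noteq> {}}"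
proof -
  have in_vspace: "t \<in> vspace R n" "s \<in> vspace R n"
    using t s subspace_subset_vspace[OF S] subspace_subset_vspace[OF T] by auto
  have neg_s: "vsmult R n (\<ominus> \<one>) s \<in> S"
    using vsmult_in_subspace[OF S _ s] by simp
  have u: "vadd R n t s \<in> vspace R n"
    using vadd_in[OF in_vspace] .
  have cancel: "vdiff R n (vadd R n t s) s = t"
    using vdiff_vadd_cancel[OF in_vspace] .
  have "vadd R n t s \<notin> S"
  proof
    assume "vadd R n t s \<in> S"
    then have "t \<in> S" using vdiff_in_subspace[OF S _ s] cancel by metis
    then show False using ST t by auto
  qed
  moreover have "t \<in> vadd R n (vadd R n t s) ` S"
    using cancel neg_s unfolding vdiff_def by (metis image_eqI)
  ultimately show ?thesis
    using u t by auto
qed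

lemma card_translates_meeting_ge:
  assumes fin: "finite (carrier R)"
    and S: "is_subspace_dim R n k S" and T: "is_subspace_dim R n k' T"
    and ST: "S \<inter> T = {vzero R n}"
  shows "(card (carrier R) ^ k' - 1) * card (carrier R) ^ k
    \<le> card {u \<in> vspace R n - S. vadd R n u ` S \<inter> T \<noteq> {}}"
proof -
  let ?D = "(T - {vzero R n}) \<times> S"
  have "finite T"
    using finite_subset[OF subspace_subset_vspace[OF T] finite_vspace[OF fin]] .
  then have "(card (carrier R) ^ k' - 1) * card (carrier R) ^ k = card ?D"
    using card_subspace[OF S fin] card_subspace[OF T fin] vzero_in_subspace[OF T]
    by (simp add: card_cartesian_product)
  also have "\<dots> = card ((\<lambda>(t, s). vadd R n t s) ` ?D)"
    by (rule card_image[symmetric], rule inj_on_subset[OF inj_on_vadd_complementary[OF S T ST]]) auto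
  also have "\<dots> \<le> card {u \<in> vspace R n - S. vadd R n u ` S \<inter> T \<noteq> {}}"
    using vadd_in_translates_meeting[OF S T ST] finite_vspace[OF fin]
    by (intro card_mono) auto
  finally show ?thesis .
qed

lemma AAD_card_mult_le:
  assumes aad: "AAD R n k L \<F>" and fin: "finite (carrier R)"
  shows "(card \<F> - 1) * ((card (carrier R) ^ k - 1) * card (carrier R) ^ k)
    \<le> L * (card (carrier R) ^ n - card (carrier R) ^ k)"
proof (cases "\<F> = {}")
  case False
  then obtain S where S: "S \<in> \<F>" by blast
  define q where "q = card (carrier R)"
  define V where "V = vspace R n"
  define meets where "meets T u \<longleftrightarrow> vadd R n u ` S \<inter> T \<noteq> {}" for T u
  have sub: "is_subspace_dim R n k T" if "T \<in> \<F>" for T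
    using aad that unfolding AAD_def by auto
  have finV: "finite V" unfolding V_def using finite_vspace[OF fin] .
  have SV: "S \<subseteq> V" unfolding V_def using subspace_subset_vspace[OF sub[OF S]] .
  have "\<F> \<subseteq> Pow V"
    using subspace_subset_vspace[OF sub] unfolding V_def by blast
  then have finF: "finite \<F>"
    using finV by (simp add: finite_subset)
  have "(card \<F> - 1) * ((q ^ k - 1) * q ^ k) = (\<Sum>T\<in>\<F> - {S}. (q ^ k - 1) * q ^ k)"
    using finF S by simp
  also have "\<dots> \<le> (\<Sum>T\<in>\<F> - {S}. card {u \<in> V - S. meets T u})"
  proof (rule sum_mono)
    fix T assume "T \<in> \<F> - {S}"
    then have "S \<inter> T = {vzero R n}" "T \<in> \<F>"
      using aad S unfolding AAD_def by auto
    then show "(q ^ k - 1) * q ^ k \<le> card {u \<in> V - S. meets T u}"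
      using card_translates_meeting_ge[OF fin sub[OF S] sub] unfolding q_def V_def meets_def by blast
  qed
  also have "\<dots> \<le> (\<Sum>T\<in>\<F>. card {u \<in> V - S. meets T u})"
    using finF by (intro sum_mono2) auto
  also have "\<dots> = (\<Sum>u\<in>V - S. card {T \<in> \<F>. meets T u})"
    using finF finV by (intro sum_card_filter_swap) auto
  also have "\<dots> \<le> card (V - S) * L"
    using aad S sum_bounded_above[of "V - S" _ L] unfolding AAD_def V_def meets_def by auto
  also have "card (V - S) = q ^ n - q ^ k"
    using card_Diff_subset[OF finite_subset[OF SV finV] SV] card_subspace[OF sub[OF S] fin]
      card_vspace[OF fin] unfolding V_def q_def by simp
  finally show ?thesis
    unfolding q_def by (simp add: mult.commute)
qed simp

end

context domain begin

lemma card_carrier_ge_2: "finite (carrier R) \<Longrightarrow> 2 \<le> card (carrier R)"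
  using card_mono[of "carrier R" "{\<zero>, \<one>}"] by simp

lemma AAD_card_le:
  assumes aad: "AAD R n k L \<F>" and fin: "finite (carrier R)" and k: "0 < k"
  shows "real (card \<F>) \<le> 1 + real L * (real (card (carrier R)) ^ (n - k) - 1)
                                          / (real (card (carrier R)) ^ k - 1)"
proof -
  define q where "q = card (carrier R)"
  have "2 \<le> q" unfolding q_def using card_carrier_ge_2[OF fin] .
  then have qk: "2 \<le> q ^ k"
    using power_increasing[of 1 k q] k by simp
  have "k \<le> n"
    using aad unfolding AAD_def by simp
  then have "q ^ n - q ^ k = (q ^ (n - k) - 1) * q ^ k"
    by (simp add: diff_mult_distrib power_add[symmetric])
  then have "(card \<F> - 1) * (q ^ k - 1) * q ^ k \<le> L * (q ^ (n - k) - 1) * q ^ k"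
    using AAD_card_mult_le[OF aad fin] unfolding q_def by (simp add: mult.assoc)
  then have nat_le: "(card \<F> - 1) * (q ^ k - 1) \<le> L * (q ^ (n - k) - 1)"
    using \<open>2 \<le> q\<close> by simp
  have q_nk: "1 \<le> q ^ (n - k)"
    using \<open>2 \<le> q\<close> by simp
  have real_qk: "2 \<le> real q ^ k"
    using qk by (metis of_nat_le_iff of_nat_numeral of_nat_power)
  show ?thesis
  proof (cases "card \<F> = 0")
    case True
    have "0 \<le> real L * (real q ^ (n - k) - 1) / (real q ^ k - 1)"
      using real_qk \<open>2 \<le> q\<close> by simp
    then show ?thesis
      using True unfolding q_def by simp
  next
    case False
    have "real ((card \<F> - 1) * (q ^ k - 1)) \<le> real (L * (q ^ (n - k) - 1))"
      using nat_le by (simp only: of_nat_le_iff)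
    moreover have "real (q ^ k - 1) = real q ^ k - 1"
      using qk by (simp add: of_nat_diff)
    ultimately have "(real (card \<F>) - 1) * (real q ^ k - 1) \<le> real L * (real q ^ (n - k) - 1)"
      using False q_nk by (simp add: of_nat_diff Suc_le_eq)
    then have "real (card \<F>) - 1 \<le> real L * (real q ^ (n - k) - 1) / (real q ^ k - 1)"
      using real_qk by (simp add: pos_le_divide_eq)
    then show ?thesis
      unfolding q_def by simp
  qed
qed

end

lemma AAD_bound_le_power:
  fixes q :: nat
  assumes q: "2 \<le> q" and k: "0 < k" and nk: "2 * k \<le> n"
  shows "1 + real L * (real q ^ (n - k) - 1) / (real q ^ k - 1) \<le> (1 + 2 * real L) * real q ^ (n - 2 * k)"
proof -
  have "2 \<le> q ^ k" using power_increasing[of 1 k q] q k by simp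
  then have qk: "(2::real) \<le> real q ^ k"
    by (metis of_nat_le_iff of_nat_numeral of_nat_power)
  have q_n2k: "(1::real) \<le> real q ^ (n - 2 * k)" using q by simp
  have split: "real q ^ (n - k) = real q ^ k * real q ^ (n - 2 * k)"
    using nk by (simp add: power_add[symmetric])
  text \<open>Since \<open>q^k \<ge> 2\<close>, we have \<open>q^k \<le> 2 (q^k - 1)\<close>.\<close>
  have "real L * (real q ^ (n - k) - 1) \<le> real L * (real q ^ k * real q ^ (n - 2 * k))"
    unfolding split by (intro mult_left_mono) auto
  also have "\<dots> \<le> real L * (2 * (real q ^ k - 1) * real q ^ (n - 2 * k))"
    using qk q_n2k by (intro mult_left_mono mult_right_mono) auto
  finally have "real L * (real q ^ (n - k) - 1) / (real q ^ k - 1) \<le> 2 * real L * real q ^ (n - 2 * k)"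
    using qk by (simp add: divide_le_eq algebra_simps)
  then show ?thesis using q_n2k by (simp add: algebra_simps)
qed

lemma mAAD_le:
  assumes q: "2 \<le> q" and k: "0 < k"
  shows "real (mAAD q n k L) \<le> (1 + 2 * real L) * real q ^ (n - 2 * k)"
proof -
  define M where "M = (1 + 2 * real L) * real q ^ (n - 2 * k)"
  define C where "C = {c. \<exists>(K :: nat ring) \<F>. field K \<and> carrier K = {0..<q} \<and> AAD K n k L \<F> \<and> c = card \<F>}"
  have "0 \<le> M" unfolding M_def by simp
  have "c \<le> nat \<lfloor>M\<rfloor>" if "c \<in> C" for c
  proof -
    obtain K :: "nat ring" and \<F> where K: "field K" "carrier K = {0..<q}" "AAD K n k L \<F>" "c = card \<F>"
      using \<open>c \<in> C\<close> unfolding C_def by blast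
    have "2 * k \<le> n" using K(3) unfolding AAD_def by simp
    have "real c \<le> 1 + real L * (real q ^ (n - k) - 1) / (real q ^ k - 1)"
      using domain.AAD_card_le[OF field.axioms(1)[OF K(1)] K(3) _ k] K(2,4) by simp
    also have "\<dots> \<le> M"
      unfolding M_def using AAD_bound_le_power[OF q k \<open>2 * k \<le> n\<close>] .
    finally show ?thesis by linarith
  qed
  then have "Sup C \<le> nat \<lfloor>M\<rfloor>"
    by (cases "C = {}") (auto intro: cSup_least)
  then have "real (Sup C) \<le> M"
    using \<open>0 \<le> M\<close> by linarith
  then show ?thesis
    unfolding mAAD_def C_def[symmetric] M_def .
qed

lemma log_mAAD_le:
  assumes q: "2 \<le> q" and k: "0 < k" and nk: "2 * k \<le> n"
  shows "log (real q) (real (mAAD q n k L)) \<le> (real n - 2 * real k) + ln (1 + 2 * real L) / ln (real q)"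
proof (cases "mAAD q n k L = 0")
  case True
  then show ?thesis using q nk by (simp add: log_def)
next
  case False
  have "log (real q) (real (mAAD q n k L)) \<le> log (real q) ((1 + 2 * real L) * real q ^ (n - 2 * k))"
    using mAAD_le[OF q k] False q by (subst log_le_cancel_iff) auto
  also have "\<dots> = real (n - 2 * k) + log (real q) (1 + 2 * real L)"
    using q by (simp add: log_mult log_nat_power)
  also have "\<dots> = (real n - 2 * real k) + ln (1 + 2 * real L) / ln (real q)"
    using nk by (simp add: log_def of_nat_diff)
  finally show ?thesis .
qed

lemma pAAD_le:
  assumes k: "0 < k" and nk: "2 * k \<le> n"
  shows "pAAD n k L \<le> ereal (real n - 2 * real k)"
proof -
  define F where "F = inf sequentially (principal {q::nat. primepow q})"
  define g where "g q = ereal ((real n - 2 * real k) + ln (1 + 2 * real L) / ln (real q))" for q :: nat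
  have F_le: "F \<le> sequentially" unfolding F_def by simp
  have "eventually (\<lambda>q. ereal (log (real q) (real (mAAD q n k L))) \<le> g q) sequentially"
    using eventually_ge_at_top[of "2::nat"]
    by eventually_elim (use log_mAAD_le k nk in \<open>simp add: g_def\<close>)
  then have "pAAD n k L \<le> Limsup F g"
    unfolding pAAD_def F_def[symmetric] by (intro Limsup_mono filter_leD[OF F_le])
  also have "Limsup F g \<le> ereal (real n - 2 * real k)"
  proof (cases "F = bot")
    case False
    have "(\<lambda>q::nat. (real n - 2 * real k) + ln (1 + 2 * real L) / ln (real q)) \<longlonglongrightarrow> (real n - 2 * real k)"
      by real_asymp
    then have "(g \<longlongrightarrow> ereal (real n - 2 * real k)) F"
      unfolding g_def by (intro tendsto_mono[OF F_le] tendsto_ereal)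
    from lim_imp_Limsup[OF False this] show ?thesis by simp
  qed simp
  finally show ?thesis .
qed

theorem mainTheorem8:
  fixes L k n :: nat
  assumes "0 < L" and "0 < k" and "0 < n" and "2 * k < n"
  shows "(\<forall>(R :: 'a ring) \<F>. field R \<and> finite (carrier R) \<and> AAD R n k L \<F> \<longrightarrow>
            real (card \<F>) \<le> 1 + real L * (real (card (carrier R)) ^ (n - k) - 1)
                                          / (real (card (carrier R)) ^ k - 1))
       \<and> pAAD n k L \<le> ereal (real n - 2 * real k)"
  using domain.AAD_card_le[OF field.axioms(1) _ _ assms(2)] pAAD_le[OF assms(2)] assms(4) by auto

end
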